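(* For every $n$-qubit pure state $\ket{\psi}$, $\mathcal{B}(\ket{\psi})\le\frac n4$, with equality for every $1$-uniform state. Moreover, every $2$-uniform $n$-qubit state $\ket{\phi}$ satisfies $\mathcal{B}(\ket{\phi})=\frac n4$ and $\mathrm{Var}_{\phi}\le\mathrm{Var}_{\psi}$ for every $n$-qubit pure state $\ket{\psi}$ with $\mathcal{B}(\ket{\psi})=\frac n4$.
   Context: Parallelized controlled-SWAP test: with $\mathbb{F}^{(i)}$ the swap of the $i$-th qubits of two copies of $\ket{\psi}$, the probability of outcome $\mathbf{z}\in\{0,1\}^n$ is $p_\psi(\mathbf{z})=\mathrm{Tr}\big[\big(\bigotimes_{i=1}^n\tfrac12(\mathbb{1}+(-1)^{z_i}\mathbb{F}^{(i)})\big)(\ket{\psi}\!\bra{\psi})^{\otimes 2}\big]$; each outcome $1$ heralds a Bell pair. The expected number of Bell pairs is $\mathcal{B}(\ket{\psi})=\sum_{\mathbf{z}}w(\mathbf{z})p_\psi(\mathbf{z})$ with $w$ the Hamming weight, and its variance is $\mathrm{Var}_\psi=\sum_{\mathbf{z}}w(\mathbf{z})^2p_\psi(\mathbf{z})-\mathcal{B}(\ket{\psi})^2$. A state is $k$-uniform if all its reduced density matrices on $k$ or fewer qubits are maximally mixed. *)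

theory Defs
  imports Complex_Main
begin

text \<open>Computational basis of n qubits: a basis string x in {0,1}^n is encoded as the
  set of positions i < n with x_i = 1, i.e. an element of Pow {..<n}.\<close>

definition is_state :: "nat \<Rightarrow> (nat set \<Rightarrow> complex) \<Rightarrow> bool" where
  "is_state n psi \<longleftrightarrow> (\<Sum>x\<in>Pow {..<n}. (cmod (psi x))^2) = 1"

text \<open>Single-qubit-pair factor (1/2)(1 + (-1)^z F) acting on the i-th qubits (a,b) of the
  two copies; matrix entry from (a',b') to (a,b). The boolean z means z_i = 1.\<close>

definition swap_factor :: "bool \<Rightarrow> bool \<times> bool \<Rightarrow> bool \<times> bool \<Rightarrow> complex" where
  "swap_factor z ab ab' =
     (1/2) * ((if ab = ab' then 1 else 0)
            + (if z then -1 else 1) * (if ab = (snd ab', fst ab') then 1 else 0))"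

text \<open>Matrix entries of the tensor product over i < n of the factors above, on the
  two-copy space with basis (x,y), x,y in Pow {..<n}. The outcome z is the set of
  positions with z_i = 1.\<close>

definition cswap_op :: "nat \<Rightarrow> nat set \<Rightarrow> nat set \<times> nat set \<Rightarrow> nat set \<times> nat set \<Rightarrow> complex" where
  "cswap_op n z xy xy' =
     (\<Prod>i<n. swap_factor (i \<in> z) (i \<in> fst xy, i \<in> snd xy) (i \<in> fst xy', i \<in> snd xy'))"

text \<open>p_psi(z) = Tr[M_z (|psi><psi|)^{\<otimes>2}] = <psi psi| M_z |psi psi> (a real number).\<close>

definition outcome_prob :: "nat \<Rightarrow> (nat set \<Rightarrow> complex) \<Rightarrow> nat set \<Rightarrow> real" where
  "outcome_prob n psi z = Re (\<Sum>x\<in>Pow {..<n}. \<Sum>y\<in>Pow {..<n}. \<Sum>x'\<in>Pow {..<n}. \<Sum>y'\<in>Pow {..<n}.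
       cnj (psi x * psi y) * cswap_op n z (x, y) (x', y') * (psi x' * psi y'))"

text \<open>Expected number of Bell pairs; Hamming weight of z is card z.\<close>

definition bell_exp :: "nat \<Rightarrow> (nat set \<Rightarrow> complex) \<Rightarrow> real" where
  "bell_exp n psi = (\<Sum>z\<in>Pow {..<n}. real (card z) * outcome_prob n psi z)"

definition bell_var :: "nat \<Rightarrow> (nat set \<Rightarrow> complex) \<Rightarrow> real" where
  "bell_var n psi = (\<Sum>z\<in>Pow {..<n}. (real (card z))^2 * outcome_prob n psi z) - (bell_exp n psi)^2"

definition reduced_dm :: "nat \<Rightarrow> (nat set \<Rightarrow> complex) \<Rightarrow> nat set \<Rightarrow> nat set \<Rightarrow> nat set \<Rightarrow> complex" where
  "reduced_dm n psi A a a' = (\<Sum>b\<in>Pow ({..<n} - A). psi (a \<union> b) * cnj (psi (a' \<union> b)))"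

definition k_uniform :: "nat \<Rightarrow> nat \<Rightarrow> (nat set \<Rightarrow> complex) \<Rightarrow> bool" where
  "k_uniform n k psi \<longleftrightarrow>
     (\<forall>A. A \<subseteq> {..<n} \<and> card A \<le> k \<longrightarrow>
        (\<forall>a a'. a \<subseteq> A \<and> a' \<subseteq> A \<longrightarrow>
           reduced_dm n psi A a a' = (if a = a' then 1 / 2 ^ card A else 0)))"

end

theory Submission
  imports Defs
begin

(* Summing the outcome distribution over all z containing a fixed set T of qubits replaces, for
   every i in T, the factor (1 + (-1)^z_i F)/2 by the projector (1 - F)/2 onto the antisymmetric
   subspace, and every other factor by the identity. Expanding the product, the probability that
   all outcomes in T equal 1 is 2^-|T| times the alternating sum over S <= T of
   <psi psi| F_S |psi psi> = Tr rho_S^2, the purity of the marginal of psi on S.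
   Hence B(psi) = sum_i (1 - Tr rho_i^2)/2 and E[w^2] = sum_{i,j} P(z_i = z_j = 1).
   Since Tr rho_S^2 >= 2^-|S|, with equality for maximally mixed marginals, B(psi) <= n/4, with
   equality iff every one-qubit marginal is maximally mixed. For such psi and i <> j,
   P(z_i = z_j = 1) = Tr rho_ij^2 / 4 >= 1/16, with equality for 2-uniform states; so 2-uniform
   states minimise the second moment, hence the variance, among all states with B = n/4. *)

lemma prod_if_mem:
  assumes "finite A" "S \<subseteq> A"
  shows "(\<Prod>k\<in>A. if k \<in> S then f k else g k) = prod f S * prod g (A - S)"
proof -
  have "A \<inter> {k. k \<in> S} = S" "A \<inter> - {k. k \<in> S} = A - S" using assms(2) by auto
  then show ?thesis by (simp add: prod.If_cases[OF assms(1)])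
qed

lemma prod_of_bool:
  assumes "finite A"
  shows "(\<Prod>x\<in>A. of_bool (P x) :: 'b::comm_semiring_1) = of_bool (\<forall>x\<in>A. P x)"
  using assms by (induction A rule: finite_induct) auto

lemma sum_Pow_prod_eq_prod_add:
  fixes g :: "'a \<Rightarrow> bool \<Rightarrow> 'b::comm_semiring_1"
  assumes "finite A"
  shows "(\<Sum>z\<in>Pow A. \<Prod>i\<in>A. g i (i \<in> z)) = (\<Prod>i\<in>A. g i True + g i False)"
proof -
  have "(\<Prod>i\<in>A. g i (i \<in> X)) = (\<Prod>i\<in>X. g i True) * (\<Prod>i\<in>A - X. g i False)" if "X \<subseteq> A" for X
  proof -
    have "(\<Prod>i\<in>A. g i (i \<in> X)) = (\<Prod>i\<in>A. if i \<in> X then g i True else g i False)"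
      by (rule prod.cong) auto
    then show ?thesis using prod_if_mem[OF assms that] by simp
  qed
  then show ?thesis by (simp add: prod_add[OF assms])
qed

lemma prod_half_differences_eq_sum_Pow:
  fixes K W :: "'a \<Rightarrow> 'b::field"
  assumes "finite A" "T \<subseteq> A"
  shows "(\<Prod>k\<in>A. if k \<in> T then (K k - W k) / 2 else K k)
       = (\<Sum>S\<in>Pow T. (-1) ^ card S / 2 ^ card T * (\<Prod>k\<in>A. if k \<in> S then W k else K k))"
proof -
  have fT: "finite T" using assms finite_subset by blast
  have "(\<Prod>k\<in>A. if k \<in> T then (K k - W k) / 2 else K k)
      = (\<Prod>k\<in>T. (- 1/2) * W k + 1/2 * K k) * prod K (A - T)"
    by (simp add: prod_if_mem[OF assms] diff_divide_distrib)
  also have "\<dots> = (\<Sum>S\<in>Pow T. (\<Prod>k\<in>S. (- 1/2) * W k) * (\<Prod>k\<in>T - S. 1/2 * K k)) * prod K (A - T)"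
    by (simp only: prod_add[OF fT])
  also have "\<dots> = (\<Sum>S\<in>Pow T. (-1) ^ card S / 2 ^ card T * (\<Prod>k\<in>A. if k \<in> S then W k else K k))"
    unfolding sum_distrib_right
  proof (rule sum.cong[OF refl])
    fix S assume "S \<in> Pow T"
    then have S: "S \<subseteq> T" "S \<subseteq> A" "finite S" using assms fT finite_subset by auto
    have "A - S - (T - S) = A - T" using S by auto
    then have split: "prod K (A - S) = prod K (T - S) * prod K (A - T)"
      using prod.subset_diff[of "T - S" "A - S" K] assms by (simp add: Diff_mono mult.commute)
    have card: "card T = card S + card (T - S)"
      using S fT by (simp add: card_Diff_subset card_mono)
    have "(\<Prod>k\<in>S. (- 1/2) * W k) * (\<Prod>k\<in>T - S. 1/2 * K k) * prod K (A - T)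
        = (- 1/2) ^ card S * (1/2) ^ card (T - S) * (prod W S * prod K (A - S))"
      by (simp only: prod.distrib prod_constant split mult_ac)
    also have "\<dots> = (-1) ^ card S / 2 ^ card T * (\<Prod>k\<in>A. if k \<in> S then W k else K k)"
      by (simp add: prod_if_mem[OF assms(1) S(2)] card power_add power_minus[of "1/2"] power_one_over)
    finally show "(\<Prod>k\<in>S. (- 1/2) * W k) * (\<Prod>k\<in>T - S. 1/2 * K k) * prod K (A - T)
        = (-1) ^ card S / 2 ^ card T * (\<Prod>k\<in>A. if k \<in> S then W k else K k)" .
  qed
  finally show ?thesis .
qed

lemma sum_sum_of_bool_delta:
  fixes F :: "'a \<Rightarrow> 'b \<Rightarrow> 'c::semiring_1"
  assumes "finite A" "finite B" "u \<in> A" "v \<in> B"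
  shows "(\<Sum>x\<in>A. \<Sum>y\<in>B. of_bool (x = u \<and> y = v) * F x y) = F u v"
proof -
  have "A \<inter> {x. x = u} = {u}" "B \<inter> {y. y = v} = {v}" using assms by auto
  then have "(\<Sum>x\<in>A. \<Sum>y\<in>B. of_bool (x = u \<and> y = v) * F x y) = (\<Sum>x\<in>A. of_bool (x = u) * F x v)"
    using assms by (intro sum.cong refl) (simp add: of_bool_conj mult.assoc del: of_bool_eq)
  also have "\<dots> = F u v"
    using assms \<open>A \<inter> {x. x = u} = {u}\<close> by simp
  finally show ?thesis .
qed

lemma sum_Pow_split:
  assumes "finite U" "S \<subseteq> U"
  shows "(\<Sum>x\<in>Pow U. g x) = (\<Sum>a\<in>Pow S. \<Sum>b\<in>Pow (U - S). g (a \<union> b))"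
proof -
  have "bij_betw (\<lambda>(a, b). a \<union> b) (Pow S \<times> Pow (U - S)) (Pow U)"
    by (rule bij_betw_byWitness[where f' = "\<lambda>x. (x \<inter> S, x - S)"]) (use assms in auto)
  then show ?thesis
    by (simp add: sum.cartesian_product sum.reindex_bij_betw[symmetric] split_def)
qed

lemma square_sum_div_card_le_sum_squares:
  fixes f :: "'a \<Rightarrow> real"
  assumes "finite A"
  shows "(\<Sum>x\<in>A. f x)\<^sup>2 / card A \<le> (\<Sum>x\<in>A. (f x)\<^sup>2)"
proof (cases "A = {}")
  case False
  define m where "m = (\<Sum>x\<in>A. f x) / card A"
  have N: "real (card A) > 0" using False assms by (simp add: card_gt_0_iff)
  have "0 \<le> (\<Sum>x\<in>A. (f x - m)\<^sup>2)" by (simp add: sum_nonneg)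
  also have "\<dots> = (\<Sum>x\<in>A. (f x)\<^sup>2) - 2 * m * (\<Sum>x\<in>A. f x) + card A * m\<^sup>2"
    by (simp add: power2_diff sum_subtractf sum.distrib sum_distrib_left sum_distrib_right mult_ac)
  also have "\<dots> = (\<Sum>x\<in>A. (f x)\<^sup>2) - (\<Sum>x\<in>A. f x)\<^sup>2 / card A"
    using N by (simp add: m_def power2_eq_square field_simps)
  finally show ?thesis by simp
qed simp

lemma card_eq_sum_of_bool:
  assumes "z \<subseteq> {..<n::nat}"
  shows "real (card z) = (\<Sum>i<n. of_bool (i \<in> z))"
proof -
  have "{..<n} \<inter> {i. i \<in> z} = z" using assms by auto
  then show ?thesis by simp
qed

(* (swap_on S x y, swap_on S y x) is the image of the basis state (x, y) of the two copies under
   the swap F_S of their qubits in S. *)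
definition swap_on :: "nat set \<Rightarrow> nat set \<Rightarrow> nat set \<Rightarrow> nat set" where
  "swap_on S x y = (x - S) \<union> (y \<inter> S)"

(* Matrix entries, from (x', y') to (x, y), of the identity and of the swap F on the k-th qubit pair. *)
definition keeps_bit :: "nat set \<Rightarrow> nat set \<Rightarrow> nat set \<Rightarrow> nat set \<Rightarrow> nat \<Rightarrow> bool" where
  "keeps_bit x y x' y' k \<longleftrightarrow> (k \<in> x' \<longleftrightarrow> k \<in> x) \<and> (k \<in> y' \<longleftrightarrow> k \<in> y)"

definition swaps_bit :: "nat set \<Rightarrow> nat set \<Rightarrow> nat set \<Rightarrow> nat set \<Rightarrow> nat \<Rightarrow> bool" where
  "swaps_bit x y x' y' k \<longleftrightarrow> (k \<in> x' \<longleftrightarrow> k \<in> y) \<and> (k \<in> y' \<longleftrightarrow> k \<in> x)"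

lemma swap_factor_bits:
  "swap_factor z (k \<in> x, k \<in> y) (k \<in> x', k \<in> y')
     = (of_bool (keeps_bit x y x' y' k) + (if z then -1 else 1) * of_bool (swaps_bit x y x' y' k)) / 2"
  by (cases z; cases "k \<in> x"; cases "k \<in> y"; cases "k \<in> x'"; cases "k \<in> y'")
    (simp_all add: swap_factor_def keeps_bit_def swaps_bit_def)

lemma prod_swaps_bit_eq_swap_on:
  assumes "x \<subseteq> {..<n}" "y \<subseteq> {..<n}" "x' \<subseteq> {..<n}" "y' \<subseteq> {..<n}"
  shows "(\<Prod>k<n. if k \<in> S then of_bool (swaps_bit x y x' y' k) else of_bool (keeps_bit x y x' y' k))
       = (of_bool (x' = swap_on S x y \<and> y' = swap_on S y x) :: 'a::comm_semiring_1)"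
proof -
  have outside: "k \<notin> x \<and> k \<notin> y \<and> k \<notin> x' \<and> k \<notin> y'" if "\<not> k < n" for k
    using assms that by auto
  have "(\<Prod>k<n. if k \<in> S then of_bool (swaps_bit x y x' y' k) else of_bool (keeps_bit x y x' y' k))
      = (\<Prod>k<n. of_bool (if k \<in> S then swaps_bit x y x' y' k else keeps_bit x y x' y' k) :: 'a)"
    by (rule prod.cong) auto
  also have "\<dots> = of_bool (\<forall>k\<in>{..<n}. if k \<in> S then swaps_bit x y x' y' k else keeps_bit x y x' y' k)"
    by (simp add: prod_of_bool del: of_bool_eq)
  also have "(\<forall>k\<in>{..<n}. if k \<in> S then swaps_bit x y x' y' k else keeps_bit x y x' y' k)
      \<longleftrightarrow> (\<forall>k. (k \<in> x' \<longleftrightarrow> k \<in> swap_on S x y) \<and> (k \<in> y' \<longleftrightarrow> k \<in> swap_on S y x))"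
    unfolding swap_on_def keeps_bit_def swaps_bit_def
  proof (intro iffI allI)
    fix k
    assume "\<forall>k\<in>{..<n}. if k \<in> S then (k \<in> x' \<longleftrightarrow> k \<in> y) \<and> (k \<in> y' \<longleftrightarrow> k \<in> x)
                        else (k \<in> x' \<longleftrightarrow> k \<in> x) \<and> (k \<in> y' \<longleftrightarrow> k \<in> y)"
    then show "(k \<in> x' \<longleftrightarrow> k \<in> x - S \<union> y \<inter> S) \<and> (k \<in> y' \<longleftrightarrow> k \<in> y - S \<union> x \<inter> S)"
      using outside[of k] by (cases "k < n") (auto split: if_splits)
  qed auto
  also have "\<dots> \<longleftrightarrow> x' = swap_on S x y \<and> y' = swap_on S y x"
    unfolding set_eq_iff by blast
  finally show ?thesis .
qed

(* Summing over z containing T turns the factor of each qubit pair in T into (1 - F)/2 and every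
   other factor into the identity. *)
lemma sum_supersets_cswap_op:
  assumes "T \<subseteq> {..<n}" "x \<subseteq> {..<n}" "y \<subseteq> {..<n}" "x' \<subseteq> {..<n}" "y' \<subseteq> {..<n}"
  shows "(\<Sum>z\<in>Pow {..<n}. of_bool (T \<subseteq> z) * cswap_op n z (x, y) (x', y'))
       = (\<Sum>S\<in>Pow T. (-1) ^ card S / 2 ^ card T * of_bool (x' = swap_on S x y \<and> y' = swap_on S y x))"
proof -
  define K where "K k = (of_bool (keeps_bit x y x' y' k) :: complex)" for k
  define W where "W k = (of_bool (swaps_bit x y x' y' k) :: complex)" for k
  define g where
    "g k b = of_bool (k \<in> T \<longrightarrow> b) * swap_factor b (k \<in> x, k \<in> y) (k \<in> x', k \<in> y')" for k b
  have "of_bool (T \<subseteq> z) * cswap_op n z (x, y) (x', y') = (\<Prod>k<n. g k (k \<in> z))" for z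
  proof -
    have "T \<subseteq> z \<longleftrightarrow> (\<forall>k\<in>{..<n}. k \<in> T \<longrightarrow> k \<in> z)" using assms(1) by auto
    then show ?thesis
      unfolding g_def cswap_op_def prod.distrib by (simp add: prod_of_bool del: of_bool_eq)
  qed
  then have "(\<Sum>z\<in>Pow {..<n}. of_bool (T \<subseteq> z) * cswap_op n z (x, y) (x', y'))
      = (\<Sum>z\<in>Pow {..<n}. \<Prod>k<n. g k (k \<in> z))" by simp
  also have "\<dots> = (\<Prod>k<n. g k True + g k False)"
    by (simp add: sum_Pow_prod_eq_prod_add)
  also have "\<dots> = (\<Prod>k<n. if k \<in> T then (K k - W k) / 2 else K k)"
    by (rule prod.cong)
      (simp_all add: g_def K_def W_def swap_factor_bits add_divide_distrib diff_divide_distrib)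
  also have "\<dots> = (\<Sum>S\<in>Pow T. (-1) ^ card S / 2 ^ card T * (\<Prod>k<n. if k \<in> S then W k else K k))"
    using prod_half_differences_eq_sum_Pow[OF _ assms(1)] by simp
  also have "\<dots> = (\<Sum>S\<in>Pow T.
      (-1) ^ card S / 2 ^ card T * of_bool (x' = swap_on S x y \<and> y' = swap_on S y x))"
    unfolding K_def W_def by (simp add: prod_swaps_bit_eq_swap_on[OF assms(2-5)] del: of_bool_eq)
  finally show ?thesis .
qed

definition pair_expect :: "nat \<Rightarrow> (nat set \<Rightarrow> complex)
    \<Rightarrow> (nat set \<Rightarrow> nat set \<Rightarrow> nat set \<Rightarrow> nat set \<Rightarrow> complex) \<Rightarrow> complex" where
  "pair_expect n psi A = (\<Sum>x\<in>Pow {..<n}. \<Sum>y\<in>Pow {..<n}. \<Sum>x'\<in>Pow {..<n}. \<Sum>y'\<in>Pow {..<n}.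
       cnj (psi x * psi y) * A x y x' y' * (psi x' * psi y'))"

lemma pair_expect_sum:
  "pair_expect n psi (\<lambda>x y x' y'. \<Sum>i\<in>I. c i * A i x y x' y') = (\<Sum>i\<in>I. c i * pair_expect n psi (A i))"
  unfolding pair_expect_def by (simp add: sum_distrib_left sum_distrib_right sum.swap[of _ I] mult_ac)

lemma pair_expect_cong:
  assumes "\<And>x y x' y'. x \<subseteq> {..<n} \<Longrightarrow> y \<subseteq> {..<n} \<Longrightarrow> x' \<subseteq> {..<n} \<Longrightarrow> y' \<subseteq> {..<n}
      \<Longrightarrow> A x y x' y' = B x y x' y'"
  shows "pair_expect n psi A = pair_expect n psi B"
  unfolding pair_expect_def using assms by (intro sum.cong refl) auto

lemma pair_expect_basis_map:
  assumes "\<And>x y. x \<subseteq> {..<n} \<Longrightarrow> y \<subseteq> {..<n} \<Longrightarrow> f x y \<subseteq> {..<n} \<and> g x y \<subseteq> {..<n}"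
  shows "pair_expect n psi (\<lambda>x y x' y'. of_bool (x' = f x y \<and> y' = g x y))
       = (\<Sum>x\<in>Pow {..<n}. \<Sum>y\<in>Pow {..<n}. cnj (psi x * psi y) * (psi (f x y) * psi (g x y)))"
  unfolding pair_expect_def
proof (intro sum.cong refl)
  fix x y assume "x \<in> Pow {..<n}" "y \<in> Pow {..<n}"
  then show "(\<Sum>x'\<in>Pow {..<n}. \<Sum>y'\<in>Pow {..<n}.
        cnj (psi x * psi y) * of_bool (x' = f x y \<and> y' = g x y) * (psi x' * psi y'))
      = cnj (psi x * psi y) * (psi (f x y) * psi (g x y))"
    using sum_sum_of_bool_delta[of "Pow {..<n}" "Pow {..<n}" "f x y" "g x y"
        "\<lambda>x' y'. cnj (psi x * psi y) * (psi x' * psi y')"] assms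
    by (simp add: mult_ac)
qed

(* Tr rho_S^2, as rho_S is Hermitian. *)
definition purity :: "nat \<Rightarrow> (nat set \<Rightarrow> complex) \<Rightarrow> nat set \<Rightarrow> real" where
  "purity n psi S = (\<Sum>a\<in>Pow S. \<Sum>a'\<in>Pow S. (cmod (reduced_dm n psi S a a'))\<^sup>2)"

lemma cmod_reduced_dm_squared:
  "of_real ((cmod (reduced_dm n psi S a a'))\<^sup>2)
     = (\<Sum>b\<in>Pow ({..<n} - S). \<Sum>b'\<in>Pow ({..<n} - S).
          cnj (psi (a \<union> b)) * psi (a' \<union> b) * psi (a \<union> b') * cnj (psi (a' \<union> b')))"
proof -
  have "of_real ((cmod (reduced_dm n psi S a a'))\<^sup>2) = cnj (reduced_dm n psi S a a') * reduced_dm n psi S a a'"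
    by (simp add: complex_norm_square mult.commute del: of_real_power)
  also have "\<dots> = (\<Sum>b\<in>Pow ({..<n} - S). cnj (psi (a \<union> b)) * psi (a' \<union> b))
                  * (\<Sum>b'\<in>Pow ({..<n} - S). psi (a \<union> b') * cnj (psi (a' \<union> b')))"
    unfolding reduced_dm_def by (simp add: cnj_sum)
  finally show ?thesis
    unfolding sum_product by (simp add: mult_ac)
qed

lemma pair_expect_swap_on:
  assumes "S \<subseteq> {..<n}"
  shows "pair_expect n psi (\<lambda>x y x' y'. of_bool (x' = swap_on S x y \<and> y' = swap_on S y x))
       = of_real (purity n psi S)"
proof -
  let ?U = "{..<n}"
  have "pair_expect n psi (\<lambda>x y x' y'. of_bool (x' = swap_on S x y \<and> y' = swap_on S y x))
      = (\<Sum>x\<in>Pow ?U. \<Sum>y\<in>Pow ?U. cnj (psi x * psi y) * (psi (swap_on S x y) * psi (swap_on S y x)))"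
    by (rule pair_expect_basis_map) (auto simp: swap_on_def)
  also have "\<dots> = (\<Sum>a\<in>Pow S. \<Sum>b\<in>Pow (?U - S). \<Sum>a'\<in>Pow S. \<Sum>b'\<in>Pow (?U - S).
       cnj (psi (a \<union> b) * psi (a' \<union> b'))
       * (psi (swap_on S (a \<union> b) (a' \<union> b')) * psi (swap_on S (a' \<union> b') (a \<union> b))))"
    by (simp add: sum_Pow_split[OF _ assms])
  also have "\<dots> = (\<Sum>a\<in>Pow S. \<Sum>b\<in>Pow (?U - S). \<Sum>a'\<in>Pow S. \<Sum>b'\<in>Pow (?U - S).
       cnj (psi (a \<union> b)) * psi (a' \<union> b) * psi (a \<union> b') * cnj (psi (a' \<union> b')))"
  proof (intro sum.cong refl)
    fix a b a' b' assume "a \<in> Pow S" "b \<in> Pow (?U - S)" "a' \<in> Pow S" "b' \<in> Pow (?U - S)"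
    then have "swap_on S (a \<union> b) (a' \<union> b') = a' \<union> b" "swap_on S (a' \<union> b') (a \<union> b) = a \<union> b'"
      unfolding swap_on_def by auto
    then show "cnj (psi (a \<union> b) * psi (a' \<union> b'))
          * (psi (swap_on S (a \<union> b) (a' \<union> b')) * psi (swap_on S (a' \<union> b') (a \<union> b)))
        = cnj (psi (a \<union> b)) * psi (a' \<union> b) * psi (a \<union> b') * cnj (psi (a' \<union> b'))"
      by (simp add: mult_ac)
  qed
  also have "\<dots> = (\<Sum>a\<in>Pow S. \<Sum>a'\<in>Pow S. of_real ((cmod (reduced_dm n psi S a a'))\<^sup>2))"
    unfolding cmod_reduced_dm_squared by (intro sum.cong refl sum.swap)
  also have "\<dots> = of_real (purity n psi S)"
    unfolding purity_def by simp
  finally show ?thesis .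
qed

definition prob_ones :: "nat \<Rightarrow> (nat set \<Rightarrow> complex) \<Rightarrow> nat set \<Rightarrow> real" where
  "prob_ones n psi T = (\<Sum>z\<in>Pow {..<n}. of_bool (T \<subseteq> z) * outcome_prob n psi z)"

lemma prob_ones_eq_purity_sum:
  assumes "T \<subseteq> {..<n}"
  shows "prob_ones n psi T = (\<Sum>S\<in>Pow T. (-1) ^ card S * purity n psi S) / 2 ^ card T"
proof -
  have outcome_prob:
    "outcome_prob n psi z = Re (pair_expect n psi (\<lambda>x y x' y'. cswap_op n z (x, y) (x', y')))" for z
    unfolding outcome_prob_def pair_expect_def ..
  have "prob_ones n psi T
      = Re (\<Sum>z\<in>Pow {..<n}.
          of_bool (T \<subseteq> z) * pair_expect n psi (\<lambda>x y x' y'. cswap_op n z (x, y) (x', y')))"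
    unfolding prob_ones_def outcome_prob Re_sum by (intro sum.cong refl) simp
  also have "\<dots> = Re (pair_expect n psi (\<lambda>x y x' y'.
      \<Sum>z\<in>Pow {..<n}. of_bool (T \<subseteq> z) * cswap_op n z (x, y) (x', y')))"
    by (simp only: pair_expect_sum)
  also have "\<dots> = Re (pair_expect n psi (\<lambda>x y x' y'. \<Sum>S\<in>Pow T.
      (-1) ^ card S / 2 ^ card T * of_bool (x' = swap_on S x y \<and> y' = swap_on S y x)))"
    by (intro arg_cong[where f = Re] pair_expect_cong sum_supersets_cswap_op assms)
  also have "\<dots> = Re (\<Sum>S\<in>Pow T. (-1) ^ card S / 2 ^ card T * of_real (purity n psi S))"
    unfolding pair_expect_sum using assms by (simp add: pair_expect_swap_on)
  also have "\<dots> = (\<Sum>S\<in>Pow T. (-1) ^ card S * purity n psi S) / 2 ^ card T"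
    by (simp add: Re_sum sum_divide_distrib)
  finally show ?thesis .
qed

lemma purity_empty:
  assumes "is_state n psi"
  shows "purity n psi {} = 1"
proof -
  have "reduced_dm n psi {} {} {} = of_real (\<Sum>b\<in>Pow {..<n}. (cmod (psi b))\<^sup>2)"
    unfolding reduced_dm_def by (simp add: complex_norm_square[symmetric] del: of_real_power)
  then have "reduced_dm n psi {} {} {} = 1"
    using assms unfolding is_state_def by simp
  then show ?thesis unfolding purity_def by simp
qed

lemma purity_lower_bound:
  assumes "is_state n psi" "S \<subseteq> {..<n}"
  shows "1 / 2 ^ card S \<le> purity n psi S"
proof -
  have fS: "finite S" using assms(2) finite_subset by blast
  define r where "r a = (\<Sum>b\<in>Pow ({..<n} - S). (cmod (psi (a \<union> b)))\<^sup>2)" for a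
  have diagonal: "reduced_dm n psi S a a = of_real (r a)" for a
    unfolding reduced_dm_def r_def by (simp add: complex_norm_square del: of_real_power)
  have "(\<Sum>a\<in>Pow S. r a) = 1"
    using assms unfolding r_def is_state_def by (simp add: sum_Pow_split)
  then have "1 / 2 ^ card S \<le> (\<Sum>a\<in>Pow S. (r a)\<^sup>2)"
    using square_sum_div_card_le_sum_squares[of "Pow S" r] fS by (simp add: card_Pow)
  also have "\<dots> = (\<Sum>a\<in>Pow S. (cmod (reduced_dm n psi S a a))\<^sup>2)"
    by (simp add: diagonal)
  also have "\<dots> \<le> purity n psi S"
    unfolding purity_def using fS by (intro sum_mono member_le_sum) auto
  finally show ?thesis .
qed

lemma purity_uniform:
  assumes "k_uniform n k psi" "S \<subseteq> {..<n}" "card S \<le> k"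
  shows "purity n psi S = 1 / 2 ^ card S"
proof -
  have fS: "finite S" using assms(2) finite_subset by blast
  have "purity n psi S = (\<Sum>a\<in>Pow S. \<Sum>a'\<in>Pow S. if a = a' then (1 / 2 ^ card S)\<^sup>2 else 0)"
    using assms unfolding purity_def k_uniform_def by (intro sum.cong refl) (simp add: norm_divide norm_power)
  also have "\<dots> = 1 / 2 ^ card S"
    using fS by (simp add: sum.delta card_Pow power2_eq_square)
  finally show ?thesis .
qed

lemma prob_ones_singleton:
  assumes "is_state n psi" "i < n"
  shows "prob_ones n psi {i} = (1 - purity n psi {i}) / 2"
  using assms by (simp add: prob_ones_eq_purity_sum Pow_insert purity_empty)

lemma prob_ones_pair:
  assumes "is_state n psi" "i < n" "j < n" "i \<noteq> j"
  shows "prob_ones n psi {i, j} = (1 - purity n psi {i} - purity n psi {j} + purity n psi {i, j}) / 4"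
proof -
  have "Pow {i, j} = {{}, {i}, {j}, {i, j}}" by (auto simp: Pow_insert)
  then show ?thesis
    using assms by (simp add: prob_ones_eq_purity_sum purity_empty insert_commute)
qed

lemma bell_exp_eq_sum_prob_ones: "bell_exp n psi = (\<Sum>i<n. prob_ones n psi {i})"
proof -
  have "bell_exp n psi = (\<Sum>z\<in>Pow {..<n}. \<Sum>i<n. of_bool ({i} \<subseteq> z) * outcome_prob n psi z)"
    unfolding bell_exp_def by (intro sum.cong refl) (simp add: card_eq_sum_of_bool sum_distrib_right)
  also have "\<dots> = (\<Sum>i<n. prob_ones n psi {i})"
    unfolding prob_ones_def by (rule sum.swap)
  finally show ?thesis .
qed

lemma bell_second_moment_eq_sum_prob_ones:
  "(\<Sum>z\<in>Pow {..<n}. (real (card z))\<^sup>2 * outcome_prob n psi z) = (\<Sum>i<n. \<Sum>j<n. prob_ones n psi {i, j})"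
proof -
  have "(\<Sum>z\<in>Pow {..<n}. (real (card z))\<^sup>2 * outcome_prob n psi z)
      = (\<Sum>z\<in>Pow {..<n}. \<Sum>i<n. \<Sum>j<n. of_bool ({i, j} \<subseteq> z) * outcome_prob n psi z)"
  proof (intro sum.cong refl)
    fix z assume "z \<in> Pow {..<n}"
    then have "(real (card z))\<^sup>2 = (\<Sum>i<n. \<Sum>j<n. of_bool (i \<in> z) * of_bool (j \<in> z))"
      by (simp add: card_eq_sum_of_bool power2_eq_square sum_product del: sum_of_bool_eq)
    then show "(real (card z))\<^sup>2 * outcome_prob n psi z
        = (\<Sum>i<n. \<Sum>j<n. of_bool ({i, j} \<subseteq> z) * outcome_prob n psi z)"
      by (simp add: sum_distrib_right flip: of_bool_conj)
  qed
  also have "\<dots> = (\<Sum>i<n. \<Sum>j<n. prob_ones n psi {i, j})"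
    unfolding prob_ones_def by (simp only: sum.swap[of _ "Pow {..<n}"])
  finally show ?thesis .
qed

lemma bell_exp_eq_sum_purity:
  assumes "is_state n psi"
  shows "bell_exp n psi = (\<Sum>i<n. (1 - purity n psi {i}) / 2)"
  using assms by (simp add: bell_exp_eq_sum_prob_ones prob_ones_singleton)

lemma bell_exp_le:
  assumes "is_state n psi"
  shows "bell_exp n psi \<le> n / 4"
proof -
  have "bell_exp n psi \<le> (\<Sum>i<n. 1 / 4)"
    unfolding bell_exp_eq_sum_purity[OF assms] using purity_lower_bound[OF assms, of "{_}"]
    by (intro sum_mono) (simp add: field_simps)
  then show ?thesis by simp
qed

lemma bell_exp_eq_iff:
  assumes "is_state n psi"
  shows "bell_exp n psi = n / 4 \<longleftrightarrow> (\<forall>i<n. purity n psi {i} = 1 / 2)"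
proof -
  have "n / 4 - bell_exp n psi = (\<Sum>i<n. (purity n psi {i} - 1 / 2) / 2)"
    by (simp add: bell_exp_eq_sum_purity[OF assms] sum_subtractf diff_divide_distrib)
  then have "bell_exp n psi = n / 4 \<longleftrightarrow> (\<Sum>i<n. (purity n psi {i} - 1 / 2) / 2) = 0"
    by linarith
  also have "\<dots> \<longleftrightarrow> (\<forall>i\<in>{..<n}. (purity n psi {i} - 1 / 2) / 2 = 0)"
    using purity_lower_bound[OF assms, of "{_}"] by (intro sum_nonneg_eq_0_iff) auto
  finally show ?thesis by auto
qed

lemma bell_exp_uniform:
  assumes "is_state n psi" "k_uniform n k psi" "1 \<le> k"
  shows "bell_exp n psi = n / 4"
proof -
  have "\<forall>i<n. purity n psi {i} = 1 / 2"
    using assms purity_uniform[OF assms(2), of "{_}"] by simp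
  then show ?thesis using bell_exp_eq_iff[OF assms(1)] by blast
qed

lemma prob_ones_pair_ge:
  assumes "is_state n psi" "\<forall>i<n. purity n psi {i} = 1 / 2" "i < n" "j < n"
  shows "(if i = j then 1 / 4 else 1 / 16) \<le> prob_ones n psi {i, j}"
proof (cases "i = j")
  case True
  then show ?thesis using assms by (simp add: prob_ones_singleton)
next
  case False
  have "purity n psi {i} = 1 / 2" "purity n psi {j} = 1 / 2" using assms by auto
  then have "prob_ones n psi {i, j} = purity n psi {i, j} / 4"
    unfolding prob_ones_pair[OF assms(1,3,4) False] by simp
  moreover have "1 / 4 \<le> purity n psi {i, j}"
    using purity_lower_bound[OF assms(1), of "{i, j}"] assms False by simp
  ultimately show ?thesis using False by simp
qed

lemma prob_ones_pair_2_uniform: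
  assumes "is_state n phi" "k_uniform n 2 phi" "i < n" "j < n"
  shows "prob_ones n phi {i, j} = (if i = j then 1 / 4 else 1 / 16)"
  using assms by (simp add: prob_ones_singleton prob_ones_pair purity_uniform)

theorem corollary3:
  fixes n :: nat
  shows "(\<forall>psi. is_state n psi \<longrightarrow> bell_exp n psi \<le> real n / 4)
       \<and> (\<forall>psi. is_state n psi \<and> k_uniform n 1 psi \<longrightarrow> bell_exp n psi = real n / 4)
       \<and> (\<forall>phi. is_state n phi \<and> k_uniform n 2 phi \<longrightarrow>
            bell_exp n phi = real n / 4 \<and>
            (\<forall>psi. is_state n psi \<and> bell_exp n psi = real n / 4 \<longrightarrow>
                   bell_var n phi \<le> bell_var n psi))"
proof (intro conjI allI impI; (elim conjE)?)
  show "bell_exp n psi \<le> real n / 4" if "is_state n psi" for psi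
    using bell_exp_le[OF that] .
  show "bell_exp n psi = real n / 4" if "is_state n psi" "k_uniform n 1 psi" for psi
    using bell_exp_uniform[OF that] by simp
  fix phi assume phi: "is_state n phi" "k_uniform n 2 phi"
  then show bell_phi: "bell_exp n phi = real n / 4"
    using bell_exp_uniform by simp
  fix psi assume psi: "is_state n psi" "bell_exp n psi = real n / 4"
  have singles: "\<forall>i<n. purity n psi {i} = 1 / 2"
    using bell_exp_eq_iff[OF psi(1)] psi(2) by blast
  have "prob_ones n phi {i, j} \<le> prob_ones n psi {i, j}" if "i < n" "j < n" for i j
    using prob_ones_pair_ge[OF psi(1) singles that] prob_ones_pair_2_uniform[OF phi that] by linarith
  then have "(\<Sum>i<n. \<Sum>j<n. prob_ones n phi {i, j}) \<le> (\<Sum>i<n. \<Sum>j<n. prob_ones n psi {i, j})"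
    by (intro sum_mono) auto
  then show "bell_var n phi \<le> bell_var n psi"
    unfolding bell_var_def bell_second_moment_eq_sum_prob_ones bell_phi psi(2) by simp
qed

end
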